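(* Let $X,X_1,X_2,\dots$ be random variables in a sub-linear expectation space $(\Omega,\mathscr H,\hat{\mathbb E})$ with $\{X_n\}$ independent, $X_n\overset d=X$ for all $n$, and $\hat{\mathbb E}[X]=\hat{\mathcal E}[X]=0$. Let $V_n^2=\sum_{i=1}^nX_i^2$, $l(x)=\hat{\mathbb E}[X^2\wedge x^2]$, and assume: (I) $\mathbb V(|X|\ge x)=o(x^{-2}l(x))$ as $x\to\infty$; (II) $\limsup_{x\to\infty}\hat{\mathbb E}[X^2\wedge x^2]/\hat{\mathcal E}[X^2\wedge x^2]<r^2$ for some $0<r<\infty$; (III) $\hat{\mathbb E}[(|X|-c)^+]\to0$ as $c\to\infty$; (IV) $x_n\to\infty$ and $x_n=o(\sqrt n)$. Let $b_0=\inf\{x\ge0:l(x)>0\}$ and $z_n=\inf\{s\ge b_0+1: l(s)/s^2\le x_n^2/n\}$. Then for every $0<\delta<r^{-2}$ and all sufficiently large $n$, $$\mathbb V\big(V_n^2\le\delta nl(z_n)\big)\le\exp\{-2x_n^2\}.$$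
   Context: Sub-linear expectation space: $\mathscr H$ is a linear space of real functions on a measurable space $(\Omega,\mathcal F)$, closed under $\varphi(X_1,\dots,X_n)$ for $\varphi$ bounded continuous or locally Lipschitz with polynomial growth; $\hat{\mathbb E}:\mathscr H\to[-\infty,\infty]$ is monotone, constant preserving, sub-additive and positively homogeneous. $\hat{\mathcal E}[X]=-\hat{\mathbb E}[-X]$; $\mathbb V(A)=\inf\{\hat{\mathbb E}[\xi]:I_A\le\xi,\xi\in\mathscr H\}$. Independence: $\mathbf Y$ is independent of $\mathbf X$ if $\hat{\mathbb E}[\varphi(\mathbf X,\mathbf Y)]=\hat{\mathbb E}[\hat{\mathbb E}[\varphi(\mathbf x,\mathbf Y)]|_{\mathbf x=\mathbf X}]$ for all locally Lipschitz $\varphi$ of polynomial growth (whenever the relevant expectations are finite); $\{X_n\}$ is independent if $X_{i+1}$ is independent of $(X_1,\dots,X_i)$ for each $i$. $X_n\overset d=X$ means $\hat{\mathbb E}[\varphi(X_n)]=\hat{\mathbb E}[\varphi(X)]$ for all such $\varphi$. $a\wedge b=\min(a,b)$. *)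

theory Defs
  imports "HOL-Analysis.Analysis" "HOL-Library.Landau_Symbols"
begin

text \<open>Points of R^n are represented by real lists of length n.\<close>

definition lnorm :: "real list \<Rightarrow> real" where
  "lnorm xs = sqrt (\<Sum>t\<leftarrow>xs. t^2)"

definition ldist :: "real list \<Rightarrow> real list \<Rightarrow> real" where
  "ldist xs ys = lnorm (map (\<lambda>(a,b). a - b) (zip xs ys))"

definition bdd_cont_fun :: "nat \<Rightarrow> (real list \<Rightarrow> real) \<Rightarrow> bool" where
  "bdd_cont_fun n \<phi> \<longleftrightarrow>
     (\<exists>B. \<forall>x. length x = n \<longrightarrow> \<bar>\<phi> x\<bar> \<le> B) \<and>
     (\<forall>x. length x = n \<longrightarrow> (\<forall>\<epsilon>>0. \<exists>\<delta>>0. \<forall>y. length y = n \<and> ldist x y < \<delta>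
          \<longrightarrow> \<bar>\<phi> x - \<phi> y\<bar> < \<epsilon>))"

definition lip_poly_fun :: "nat \<Rightarrow> (real list \<Rightarrow> real) \<Rightarrow> bool" where
  "lip_poly_fun n \<phi> \<longleftrightarrow>
     (\<exists>C (m::nat). \<forall>x y. length x = n \<and> length y = n \<longrightarrow>
        \<bar>\<phi> x - \<phi> y\<bar> \<le> C * (1 + lnorm x ^ m + lnorm y ^ m) * ldist x y)"

definition sublinear_expectation_space ::
  "('a \<Rightarrow> real) set \<Rightarrow> (('a \<Rightarrow> real) \<Rightarrow> ereal) \<Rightarrow> bool" where
  "sublinear_expectation_space H E \<longleftrightarrow>
     (\<forall>c. (\<lambda>_. c) \<in> H) \<and>
     (\<forall>X\<in>H. \<forall>Y\<in>H. (\<lambda>\<omega>. X \<omega> + Y \<omega>) \<in> H) \<and>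
     (\<forall>X\<in>H. \<forall>c. (\<lambda>\<omega>. c * X \<omega>) \<in> H) \<and>
     (\<forall>n \<phi> Xs. length Xs = n \<and> set Xs \<subseteq> H \<and> (bdd_cont_fun n \<phi> \<or> lip_poly_fun n \<phi>)
        \<longrightarrow> (\<lambda>\<omega>. \<phi> (map (\<lambda>X. X \<omega>) Xs)) \<in> H) \<and>
     (\<forall>X\<in>H. \<forall>Y\<in>H. (\<forall>\<omega>. X \<omega> \<le> Y \<omega>) \<longrightarrow> E X \<le> E Y) \<and>
     (\<forall>c. E (\<lambda>_. c) = ereal c) \<and>
     (\<forall>X\<in>H. \<forall>Y\<in>H. E (\<lambda>\<omega>. X \<omega> + Y \<omega>) \<le> E X + E Y) \<and>
     (\<forall>X\<in>H. \<forall>c>0. E (\<lambda>\<omega>. c * X \<omega>) = ereal c * E X)"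

definition lower_exp :: "(('a \<Rightarrow> real) \<Rightarrow> ereal) \<Rightarrow> ('a \<Rightarrow> real) \<Rightarrow> ereal" where
  "lower_exp E X = - E (\<lambda>\<omega>. - X \<omega>)"

definition capacity :: "('a \<Rightarrow> real) set \<Rightarrow> (('a \<Rightarrow> real) \<Rightarrow> ereal) \<Rightarrow> 'a set \<Rightarrow> ereal" where
  "capacity H E A = Inf {E \<xi> | \<xi>. \<xi> \<in> H \<and> (\<forall>\<omega>. indicator A \<omega> \<le> \<xi> \<omega>)}"

definition indep_of ::
  "('a \<Rightarrow> real) set \<Rightarrow> (('a \<Rightarrow> real) \<Rightarrow> ereal) \<Rightarrow> ('a \<Rightarrow> real) list \<Rightarrow> ('a \<Rightarrow> real) \<Rightarrow> bool" where
  "indep_of H E Xs Y \<longleftrightarrow>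
     (\<forall>\<phi>. lip_poly_fun (Suc (length Xs)) \<phi> \<longrightarrow>
        (\<forall>x. length x = length Xs \<longrightarrow> \<bar>E (\<lambda>\<omega>. \<phi> (x @ [Y \<omega>]))\<bar> \<noteq> \<infinity>) \<longrightarrow>
        E (\<lambda>\<omega>. \<phi> (map (\<lambda>X. X \<omega>) Xs @ [Y \<omega>])) =
        E (\<lambda>\<omega>. real_of_ereal (E (\<lambda>\<omega>'. \<phi> (map (\<lambda>X. X \<omega>) Xs @ [Y \<omega>'])))))"

text \<open>independent sequence (0-based: Xs 0, Xs 1, ... stand for X_1, X_2, ...)\<close>
definition indep_seq ::
  "('a \<Rightarrow> real) set \<Rightarrow> (('a \<Rightarrow> real) \<Rightarrow> ereal) \<Rightarrow> (nat \<Rightarrow> 'a \<Rightarrow> real) \<Rightarrow> bool" where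
  "indep_seq H E Xs \<longleftrightarrow> (\<forall>i. indep_of H E (map Xs [0..<i]) (Xs i))"

definition ident_distr ::
  "(('a \<Rightarrow> real) \<Rightarrow> ereal) \<Rightarrow> ('a \<Rightarrow> real) \<Rightarrow> ('a \<Rightarrow> real) \<Rightarrow> bool" where
  "ident_distr E X Y \<longleftrightarrow>
     (\<forall>\<phi>. lip_poly_fun 1 \<phi> \<longrightarrow> E (\<lambda>\<omega>. \<phi> [X \<omega>]) = E (\<lambda>\<omega>. \<phi> [Y \<omega>]))"

definition ratio_inf :: "ereal \<Rightarrow> ereal \<Rightarrow> ereal" where
  "ratio_inf a b = (if b > 0 then a / b else \<infinity>)"

end

theory Submission
  imports Defs
begin

text \<open>
  Exponential Chebyshev bound: for \<open>lam > 0\<close> and a truncation level \<open>t\<close>,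
  \<open>V(V_n^2 \<le> B) \<le> exp(lam B) E[\<Prod>\<^sub>i exp(-lam min(X_i^2, t^2))]\<close>, and independence together
  with identical distribution factorises this upper expectation into the \<open>n\<close>-th power of
  \<open>E[exp(-lam min(X^2, t^2))]\<close>. Since \<open>exp(-u) \<le> 1 - u + u^2/2\<close>, that factor is at most
  \<open>exp(-lam (1 - lam t^2/2) L(t))\<close>, where \<open>L(t)\<close> is the lower expectation of \<open>min(X^2, t^2)\<close>.
  Choose \<open>t = \<epsilon> z_n\<close> and \<open>lam\<close> of order \<open>1/t^2\<close>: condition (II) makes \<open>L(z_n)\<close> larger than
  \<open>l(z_n)/r^2 > \<delta> l(z_n)\<close>, condition (I) shows that truncating at \<open>\<epsilon> z_n\<close> instead of \<open>z_n\<close> loses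
  only a small multiple of \<open>l(z_n)\<close>, and the choice of \<open>z_n\<close> gives \<open>n l(z_n)/z_n^2 \<ge> x_n^2\<close>, which
  turns the exponent into \<open>-2 x_n^2\<close>. Condition (III) yields \<open>l(s) = O(s)\<close>, so that the set
  defining \<open>z_n\<close> is nonempty and \<open>z_n\<close> exceeds any given level once \<open>x_n^2/n\<close> is small.
\<close>

lemma exp_neg_le_quadratic:
  fixes u :: real
  assumes "0 \<le> u"
  shows "exp (-u) \<le> 1 - u + u^2/2"
proof -
  let ?h = "\<lambda>u::real. 1 - u + u^2/2 - exp (-u)"
  have "?h 0 \<le> ?h u"
  proof (rule DERIV_nonneg_imp_nondecreasing[OF assms])
    fix x :: real
    have d: "DERIV ?h x :> (-1 + x + exp (-x))"
      by (auto intro!: derivative_eq_intros simp: power2_eq_square)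
    have "1 + (-x) \<le> exp (-x)" by (rule exp_ge_add_one_self)
    then show "\<exists>y. DERIV ?h x :> y \<and> y \<ge> 0"
      using d by (intro exI[of _ "-1 + x + exp (-x)"]) auto
  qed
  then show ?thesis by simp
qed

lemma abs_exp_diff_le_nonpos:
  fixes u v :: real
  assumes "u \<le> 0" "v \<le> 0"
  shows "\<bar>exp u - exp v\<bar> \<le> \<bar>u - v\<bar>"
proof -
  have le: "exp q - exp p \<le> q - p" if "p \<le> q" "q \<le> 0" for p q :: real
  proof -
    have "1 + (p - q) \<le> exp (p - q)" by (rule exp_ge_add_one_self)
    then have "1 - exp (p - q) \<le> q - p" by linarith
    then have "exp q * (1 - exp (p - q)) \<le> 1 * (q - p)"
      using that by (intro mult_mono) auto
    then show ?thesis by (simp add: algebra_simps exp_diff)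
  qed
  show ?thesis
    using le[of u v] le[of v u] assms by (cases "u \<le> v") auto
qed

lemma min_square_lipschitz:
  fixes a b t :: real
  shows "\<bar>min (a^2) (t^2) - min (b^2) (t^2)\<bar> \<le> 2 * \<bar>t\<bar> * \<bar>a - b\<bar>"
proof -
  define p where "p = min \<bar>a\<bar> \<bar>t\<bar>"
  define q where "q = min \<bar>b\<bar> \<bar>t\<bar>"
  have pa: "min (a^2) (t^2) = p^2" unfolding p_def
    by (metis abs_ge_zero min_def power2_abs power_mono power2_le_imp_le)
  have qb: "min (b^2) (t^2) = q^2" unfolding q_def
    by (metis abs_ge_zero min_def power2_abs power_mono power2_le_imp_le)
  have "\<bar>p - q\<bar> \<le> \<bar>a - b\<bar>" unfolding p_def q_def by (auto simp: min_def abs_if)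
  moreover have "0 \<le> p + q" "p + q \<le> 2 * \<bar>t\<bar>" unfolding p_def q_def by auto
  ultimately have "\<bar>p - q\<bar> * (p + q) \<le> \<bar>a - b\<bar> * (2 * \<bar>t\<bar>)"
    by (intro mult_mono) auto
  moreover have "\<bar>p^2 - q^2\<bar> = \<bar>p - q\<bar> * (p + q)"
  proof -
    have "p^2 - q^2 = (p - q) * (p + q)" by (simp add: power2_eq_square algebra_simps)
    then show ?thesis using \<open>0 \<le> p + q\<close> by (simp add: abs_mult)
  qed
  ultimately show ?thesis using pa qb by (simp add: mult_ac)
qed

lemma exp_neg_trunc_sq_lipschitz:
  fixes lam t a b :: real
  assumes "0 \<le> lam"
  shows "\<bar>exp (- (lam * min (a\<^sup>2) (t\<^sup>2))) - exp (- (lam * min (b\<^sup>2) (t\<^sup>2)))\<bar>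
    \<le> lam * (2 * \<bar>t\<bar>) * \<bar>a - b\<bar>"
proof -
  have "\<bar>exp (- (lam * min (a\<^sup>2) (t\<^sup>2))) - exp (- (lam * min (b\<^sup>2) (t\<^sup>2)))\<bar>
      \<le> lam * \<bar>min (a\<^sup>2) (t\<^sup>2) - min (b\<^sup>2) (t\<^sup>2)\<bar>"
  proof -
    have "- (lam * min (a\<^sup>2) (t\<^sup>2)) - - (lam * min (b\<^sup>2) (t\<^sup>2))
        = - (lam * (min (a\<^sup>2) (t\<^sup>2) - min (b\<^sup>2) (t\<^sup>2)))"
      by (simp add: algebra_simps)
    then show ?thesis
      using abs_exp_diff_le_nonpos[of "- (lam * min (a\<^sup>2) (t\<^sup>2))" "- (lam * min (b\<^sup>2) (t\<^sup>2))"] assms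
      by (simp add: abs_mult)
  qed
  also have "\<dots> \<le> lam * (2 * \<bar>t\<bar>) * \<bar>a - b\<bar>"
    using min_square_lipschitz[of a t b] assms by (simp add: mult_left_mono mult.assoc)
  finally show ?thesis .
qed

lemma indicator_sum_sq_le_exp_prod:
  fixes a :: "nat \<Rightarrow> real"
  assumes "0 \<le> lam"
  shows "of_bool ((\<Sum>i<n. (a i)\<^sup>2) \<le> B)
    \<le> exp (lam * B) * (\<Prod>i<n. exp (- (lam * min ((a i)\<^sup>2) (t\<^sup>2))))"
proof -
  have "exp (- (lam * (\<Sum>i<n. (a i)\<^sup>2))) = (\<Prod>i<n. exp (- (lam * (a i)\<^sup>2)))"
    by (simp add: sum_distrib_left exp_sum flip: sum_negf)
  also have "\<dots> \<le> (\<Prod>i<n. exp (- (lam * min ((a i)\<^sup>2) (t\<^sup>2))))"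
    using assms by (intro prod_mono) (auto simp: mult_left_mono)
  finally have prod_ge: "exp (- (lam * (\<Sum>i<n. (a i)\<^sup>2))) \<le> (\<Prod>i<n. exp (- (lam * min ((a i)\<^sup>2) (t\<^sup>2))))" .
  show ?thesis
  proof (cases "(\<Sum>i<n. (a i)\<^sup>2) \<le> B")
    case True
    have "1 \<le> exp (lam * B) * exp (- (lam * (\<Sum>i<n. (a i)\<^sup>2)))"
      using True assms by (simp add: mult_left_mono flip: exp_add)
    also have "\<dots> \<le> exp (lam * B) * (\<Prod>i<n. exp (- (lam * min ((a i)\<^sup>2) (t\<^sup>2))))"
      by (rule mult_left_mono[OF prod_ge]) simp
    finally show ?thesis using True by simp
  qed (simp add: prod_nonneg)
qed

lemma chernoff_exponent_bound:
  fixes \<rho> \<delta> a \<beta> e2 Z L n W lam y :: real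
  assumes "0 < \<delta>" "\<rho> = \<delta> + a" "0 < a" "0 < \<beta>" "\<beta> \<le> 1" "\<beta> * \<rho> \<le> a / 2"
    "0 < e2" "4 * e2 \<le> \<beta> * a" "0 < Z" "0 < L" "0 \<le> n" "L * \<rho> - a * L / 4 \<le> W"
    "lam = \<beta> / (e2 * Z^2)" "y \<le> n * L / Z^2" "0 \<le> y"
  shows "lam * (\<delta> * n * L) - n * (lam * (1 - \<beta>/2) * W) \<le> -2 * y"
proof -
  have "L * (\<delta> + a/2) \<le> L * ((1 - \<beta>/2) * (\<rho> - a / 4))"
  proof (rule mult_left_mono)
    have "0 \<le> \<beta> * a" using assms by simp
    then show "\<delta> + a/2 \<le> (1 - \<beta>/2) * (\<rho> - a / 4)"
      using assms by (simp add: algebra_simps)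
  qed (use assms in simp)
  also have "\<dots> = (1 - \<beta>/2) * (L * \<rho> - a * L / 4)" by (simp add: field_simps)
  also have "\<dots> \<le> (1 - \<beta>/2) * W"
    using assms by (intro mult_left_mono) auto
  finally have W: "L * (\<delta> + a/2) \<le> (1 - \<beta>/2) * W" .
  have "lam * (\<delta> * n * L) - n * (lam * (1 - \<beta>/2) * W) = lam * n * (\<delta> * L - (1 - \<beta>/2) * W)"
    by (simp add: algebra_simps)
  also have "\<dots> \<le> lam * n * (\<delta> * L - L * (\<delta> + a/2))"
    using W assms by (intro mult_left_mono) auto
  also have "\<dots> = - (a/2) * (\<beta> / e2) * (n * L / Z^2)"
    using assms(13) by (simp add: algebra_simps)
  also have "\<dots> \<le> - (a/2) * (\<beta> / e2) * y"
    using mult_left_mono[of y "n * L / Z^2" "(a/2) * (\<beta> / e2)"] assms by simp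
  also have "\<dots> \<le> -2 * y"
  proof -
    have "2 \<le> (a/2) * (\<beta> / e2)" using assms by (simp add: field_simps)
    then show ?thesis using assms mult_right_mono[of 2 "(a/2) * (\<beta> / e2)" y] by simp
  qed
  finally show ?thesis .
qed

lemma ldist_nonneg: "0 \<le> ldist x y"
  unfolding ldist_def lnorm_def by (rule real_sqrt_ge_zero) (auto intro!: sum_list_nonneg)

lemma ldist_Cons: "ldist (a # x) (b # y) = sqrt ((a - b)^2 + (ldist x y)^2)"
proof -
  have "0 \<le> (\<Sum>t\<leftarrow>map (\<lambda>(a, b). a - b) (zip x y). t^2)" by (auto intro!: sum_list_nonneg)
  then show ?thesis unfolding ldist_def lnorm_def by simp
qed

lemma lip_poly_fun_if_lipschitz:
  assumes "0 \<le> C" "\<And>x y. length x = n \<Longrightarrow> length y = n \<Longrightarrow> \<bar>\<phi> x - \<phi> y\<bar> \<le> C * ldist x y"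
  shows "lip_poly_fun n \<phi>"
  unfolding lip_poly_fun_def
proof (intro exI[of _ C] exI[of _ "0::nat"] allI impI)
  fix x y :: "real list" assume "length x = n \<and> length y = n"
  then have "\<bar>\<phi> x - \<phi> y\<bar> \<le> C * ldist x y" using assms(2) by auto
  also have "\<dots> \<le> C * (1 + lnorm x ^ 0 + lnorm y ^ 0) * ldist x y"
    using assms(1) ldist_nonneg[of x y] by (simp add: mult_right_mono)
  finally show "\<bar>\<phi> x - \<phi> y\<bar> \<le> C * (1 + lnorm x ^ 0 + lnorm y ^ 0) * ldist x y" .
qed

lemma lip_poly_fun_hd:
  assumes "0 \<le> C" "\<And>a b. \<bar>f a - f b\<bar> \<le> C * \<bar>a - b\<bar>"
  shows "lip_poly_fun 1 (\<lambda>ys. f (hd ys))"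
proof (rule lip_poly_fun_if_lipschitz[OF assms(1)])
  fix x y :: "real list" assume "length x = 1" "length y = 1"
  then obtain a b where "x = [a]" "y = [b]" by (auto simp: length_Suc_conv)
  then show "\<bar>f (hd x) - f (hd y)\<bar> \<le> C * ldist x y"
    using assms(2)[of a b] by (simp add: ldist_def lnorm_def)
qed

lemma prod_list_map_unit_interval:
  fixes g :: "'b \<Rightarrow> real"
  assumes "\<And>a. 0 \<le> g a \<and> g a \<le> 1"
  shows "0 \<le> prod_list (map g x) \<and> prod_list (map g x) \<le> 1"
  by (induction x) (use assms in \<open>auto intro: mult_le_one\<close>)

lemma prod_list_map_lipschitz:
  fixes g :: "real \<Rightarrow> real"
  assumes g01: "\<And>a. 0 \<le> g a \<and> g a \<le> 1" and g_lip: "\<And>a b. \<bar>g a - g b\<bar> \<le> K * \<bar>a - b\<bar>"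
    and K: "0 \<le> K"
  shows "length x = length y
    \<Longrightarrow> \<bar>prod_list (map g x) - prod_list (map g y)\<bar> \<le> K * length x * ldist x y"
proof (induction x arbitrary: y)
  case Nil then show ?case by simp
next
  case (Cons a x)
  then obtain b y' where y: "y = b # y'" and len: "length x = length y'" by (cases y) auto
  let ?P = "prod_list (map g x)" and ?Q = "prod_list (map g y')" and ?d = "ldist (a # x) (b # y')"
  have P01: "0 \<le> ?P" "?P \<le> 1"
    using prod_list_map_unit_interval[of g x] g01 by auto
  have IH: "\<bar>?P - ?Q\<bar> \<le> K * length x * ldist x y'" using Cons.IH len by blast
  have d1: "\<bar>a - b\<bar> \<le> ?d"
    unfolding ldist_Cons by (rule real_le_rsqrt) simp
  have d2: "ldist x y' \<le> ?d"
    unfolding ldist_Cons by (rule real_le_rsqrt) simp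
  have "\<bar>g a * ?P - g b * ?Q\<bar> \<le> \<bar>g a - g b\<bar> * ?P + g b * \<bar>?P - ?Q\<bar>"
  proof -
    have "g a * ?P - g b * ?Q = (g a - g b) * ?P + g b * (?P - ?Q)" by (simp add: algebra_simps)
    then have "\<bar>g a * ?P - g b * ?Q\<bar> \<le> \<bar>(g a - g b) * ?P\<bar> + \<bar>g b * (?P - ?Q)\<bar>"
      by (simp only: abs_triangle_ineq)
    then show ?thesis using P01 g01[of b] by (simp add: abs_mult)
  qed
  also have "\<dots> \<le> K * \<bar>a - b\<bar> * 1 + 1 * (K * length x * ldist x y')"
  proof (rule add_mono)
    show "\<bar>g a - g b\<bar> * ?P \<le> K * \<bar>a - b\<bar> * 1"
      by (rule mult_mono) (use g_lip[of a b] P01 in auto)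
    show "g b * \<bar>?P - ?Q\<bar> \<le> 1 * (K * length x * ldist x y')"
      by (rule mult_mono) (use g01[of b] IH in auto)
  qed
  also have "\<dots> \<le> K * ?d + K * length x * ?d"
    using mult_left_mono[OF d1 K] mult_left_mono[OF d2, of "K * length x"] K by simp
  finally show ?case using y by (simp add: algebra_simps)
qed

lemma ident_distr_lipschitz_comp:
  assumes "ident_distr E Y Z" "0 \<le> C" "\<And>a b. \<bar>f a - f b\<bar> \<le> C * \<bar>a - b\<bar>"
  shows "E (\<lambda>\<omega>. f (Y \<omega>)) = E (\<lambda>\<omega>. f (Z \<omega>))"
proof -
  have "E (\<lambda>\<omega>. (\<lambda>ys. f (hd ys)) [Y \<omega>]) = E (\<lambda>\<omega>. (\<lambda>ys. f (hd ys)) [Z \<omega>])"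
    using assms(1) lip_poly_fun_hd[OF assms(2,3)] unfolding ident_distr_def by blast
  then show ?thesis by simp
qed

section \<open>The normalising levels\<close>

lemma Inf_sublevel_ratio_bounds:
  fixes l :: "real \<Rightarrow> real"
  assumes mono: "\<And>s s'. 0 \<le> s \<Longrightarrow> s \<le> s' \<Longrightarrow> l s \<le> l s'"
    and lpos: "0 < l (b0 + 1)" and b0: "0 \<le> b0"
    and growth: "\<And>s. 0 < s \<Longrightarrow> l s \<le> s * C"
    and y: "0 < y" and K: "b0 + 2 \<le> K" and yK: "y < l (b0 + 1) / K^2"
    and z: "z = Inf {s. s \<ge> b0 + 1 \<and> l s / s^2 \<le> y}"
  shows "K \<le> z" "y \<le> l z / z^2"
proof -
  define T where "T = {s. s \<ge> b0 + 1 \<and> l s / s^2 \<le> y}"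
  have "0 < (b0+1) * C" using growth[of "b0+1"] lpos b0 by fastforce
  then have C: "0 < C" using b0 by (simp add: zero_less_mult_iff)
  define s0 where "s0 = max (b0 + 1) (C / y)"
  have s0pos: "0 < s0" unfolding s0_def using b0 by linarith
  have "l s0 / s0^2 \<le> s0 * C / s0^2" by (rule divide_right_mono[OF growth[OF s0pos]]) simp
  also have "\<dots> = C / s0" using s0pos by (simp add: power2_eq_square)
  also have "\<dots> \<le> C / (C / y)" by (rule divide_left_mono) (use C y s0pos in \<open>auto simp: s0_def\<close>)
  also have "\<dots> = y" using C by simp
  finally have "s0 \<in> T" unfolding T_def s0_def by auto
  then have ne: "T \<noteq> {}" by auto
  have bdd: "bdd_below T" unfolding T_def by (rule bdd_belowI[of _ "b0+1"]) auto
  have geK: "K \<le> s" if "s \<in> T" for s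
  proof (rule ccontr)
    assume "\<not> K \<le> s"
    have s1: "b0 + 1 \<le> s" and sy: "l s / s^2 \<le> y" using that unfolding T_def by auto
    have spos: "0 < s" using s1 b0 by linarith
    have ls: "l (b0+1) \<le> l s" by (rule mono) (use b0 s1 in auto)
    have "s^2 \<le> K^2" using \<open>\<not> K \<le> s\<close> spos by (intro power_mono) auto
    have "0 < K^2 * s^2" using K b0 spos by simp
    have "l (b0+1) / K^2 \<le> l s / K^2" using ls by (simp add: divide_right_mono)
    also have "\<dots> \<le> l s / s^2" using \<open>s^2 \<le> K^2\<close> \<open>0 < K^2 * s^2\<close> lpos ls
      by (intro divide_left_mono) auto
    finally show False using sy yK by linarith
  qed
  show Kz: "K \<le> z" unfolding z T_def[symmetric] by (rule cInf_greatest[OF ne geK])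
  show "y \<le> l z / z^2"
  proof (rule ccontr)
    assume "\<not> y \<le> l z / z^2"
    have zpos: "0 < z" using Kz K b0 by linarith
    have lz: "0 < l z" using mono[of "b0+1" z] lpos Kz K b0 by linarith
    have lzy: "l z < y * z^2" using \<open>\<not> y \<le> l z / z^2\<close> zpos by (simp add: field_simps)
    define q where "q = l z / y"
    have q: "0 < q" "q < z^2" unfolding q_def using lz y lzy by (auto simp: field_simps)
    have sq: "sqrt q < z" using q zpos by (metis real_sqrt_less_iff real_sqrt_abs abs_of_pos)
    \<comment> \<open>a point of \<open>[b0 + 1, z)\<close> above \<open>sqrt q\<close>, hence outside the sublevel set\<close>
    define s where "s = max (b0 + 1) ((sqrt q + z) / 2)"
    have sz: "s < z" unfolding s_def using sq Kz K by auto
    have s1: "b0 + 1 \<le> s" unfolding s_def by auto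
    have "s \<notin> T"
    proof
      assume "s \<in> T" then have "z \<le> s" unfolding z T_def[symmetric] by (rule cInf_lower[OF _ bdd])
      then show False using sz by simp
    qed
    then have "y < l s / s^2" using s1 unfolding T_def by auto
    moreover have spos: "0 < s" using s1 b0 by linarith
    ultimately have ls: "y * s^2 < l s" by (simp add: field_simps)
    have "sqrt q < s" unfolding s_def using sq by (simp add: less_max_iff_disj)
    then have "(sqrt q)^2 < s^2" using q by (intro power_strict_mono) auto
    then have "q < s^2" using q by simp
    then have "l z < y * s^2" unfolding q_def using y by (simp add: field_simps)
    moreover have "l s \<le> l z" by (rule mono) (use spos sz in auto)
    ultimately show False using ls by linarith
  qed
qed

lemma Inf_positivity_threshold:
  fixes l :: "real \<Rightarrow> real"
  assumes mono: "\<And>s s'. 0 \<le> s \<Longrightarrow> s \<le> s' \<Longrightarrow> l s \<le> l s'"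
    and t: "0 \<le> t" "0 < l t" and b0: "b0 = Inf {t. t \<ge> 0 \<and> l t > 0}"
  shows "0 \<le> b0" "0 < l (b0 + 1)"
proof -
  define T0 where "T0 = {t. t \<ge> 0 \<and> l t > 0}"
  have ne: "T0 \<noteq> {}" using t by (auto simp: T0_def)
  show "0 \<le> b0" unfolding b0 T0_def[symmetric] by (rule cInf_greatest[OF ne]) (auto simp: T0_def)
  obtain t0 where "t0 \<in> T0" "t0 < b0 + 1"
    using cInf_lessD[OF ne, of "b0 + 1"] b0 by (auto simp: T0_def)
  then show "0 < l (b0 + 1)" using mono[of t0 "b0 + 1"] by (auto simp: T0_def)
qed

lemma eventually_normalizer_bounds:
  fixes l :: "real \<Rightarrow> real" and x z :: "nat \<Rightarrow> real"
  assumes mono: "\<And>s s'. 0 \<le> s \<Longrightarrow> s \<le> s' \<Longrightarrow> l s \<le> l s'"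
    and lpos: "0 < l (b0 + 1)" and b0: "0 \<le> b0"
    and growth: "\<And>s. 0 < s \<Longrightarrow> l s \<le> s * C"
    and x_lim: "filterlim x at_top sequentially" and x_small: "x \<in> o(\<lambda>n. sqrt (real n))"
    and z: "\<And>n. z n = Inf {s. s \<ge> b0 + 1 \<and> l s / s\<^sup>2 \<le> (x n)\<^sup>2 / real n}"
    and K: "b0 + 2 \<le> K"
  shows "eventually (\<lambda>n. K \<le> z n \<and> (x n)\<^sup>2 \<le> real n * l (z n) / (z n)\<^sup>2) sequentially"
proof -
  define q where "q = l (b0 + 1) / K\<^sup>2"
  have q: "0 < q" using lpos K b0 by (simp add: q_def)
  have "eventually (\<lambda>n. 1 \<le> x n) sequentially" using x_lim unfolding filterlim_at_top by blast
  moreover have "eventually (\<lambda>n. norm (x n) \<le> sqrt q / 2 * norm (sqrt (real n))) sequentially"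
    by (rule landau_o.smallD[OF x_small]) (use q in simp)
  moreover have "eventually (\<lambda>n. 1 \<le> n) sequentially" by (rule eventually_ge_at_top)
  ultimately show ?thesis
  proof eventually_elim
    case (elim n)
    define y where "y = (x n)\<^sup>2 / real n"
    have n: "0 < real n" using elim(3) by simp
    have y: "0 < y" using elim(1) n by (simp add: y_def)
    have "\<bar>x n\<bar>\<^sup>2 \<le> (sqrt q / 2 * sqrt (real n))\<^sup>2" using elim(2) by (intro power_mono) auto
    then have "(x n)\<^sup>2 \<le> q / 4 * real n" using q by (simp add: power_mult_distrib power_divide)
    then have "y \<le> q / 4" using n by (simp add: y_def divide_le_eq)
    then have "y < l (b0 + 1) / K\<^sup>2" using q by (simp add: q_def)
    note z_bounds = Inf_sublevel_ratio_bounds[OF mono lpos b0 growth y K this z[of n, folded y_def]]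
    then show ?case using n by (simp add: y_def field_simps)
  qed
qed

locale sublinear_expectation =
  fixes H :: "('a \<Rightarrow> real) set" and E :: "('a \<Rightarrow> real) \<Rightarrow> ereal"
  assumes space: "sublinear_expectation_space H E"
begin

lemma const_mem: "(\<lambda>_. c) \<in> H"
  using space unfolding sublinear_expectation_space_def by blast

lemma add_mem: "X \<in> H \<Longrightarrow> Y \<in> H \<Longrightarrow> (\<lambda>\<omega>. X \<omega> + Y \<omega>) \<in> H"
  using space unfolding sublinear_expectation_space_def by blast

lemma scale_mem: "X \<in> H \<Longrightarrow> (\<lambda>\<omega>. c * X \<omega>) \<in> H"
  using space unfolding sublinear_expectation_space_def by blast

lemma lip_poly_comp_mem:
  "set Ys \<subseteq> H \<Longrightarrow> lip_poly_fun (length Ys) \<phi> \<Longrightarrow> (\<lambda>\<omega>. \<phi> (map (\<lambda>Y. Y \<omega>) Ys)) \<in> H"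
  using space unfolding sublinear_expectation_space_def by blast

lemma E_mono: "X \<in> H \<Longrightarrow> Y \<in> H \<Longrightarrow> (\<And>\<omega>. X \<omega> \<le> Y \<omega>) \<Longrightarrow> E X \<le> E Y"
  using space unfolding sublinear_expectation_space_def by blast

lemma E_const: "E (\<lambda>_. c) = ereal c"
  using space unfolding sublinear_expectation_space_def by blast

lemma E_add_le: "X \<in> H \<Longrightarrow> Y \<in> H \<Longrightarrow> E (\<lambda>\<omega>. X \<omega> + Y \<omega>) \<le> E X + E Y"
  using space unfolding sublinear_expectation_space_def by blast

lemma E_scale: "X \<in> H \<Longrightarrow> 0 < c \<Longrightarrow> E (\<lambda>\<omega>. c * X \<omega>) = ereal c * E X"
  using space unfolding sublinear_expectation_space_def by blast

lemma lipschitz_comp_mem: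
  assumes "Y \<in> H" "0 \<le> C" "\<And>a b. \<bar>f a - f b\<bar> \<le> C * \<bar>a - b\<bar>"
  shows "(\<lambda>\<omega>. f (Y \<omega>)) \<in> H"
  using lip_poly_comp_mem[of "[Y]" "\<lambda>ys. f (hd ys)"] lip_poly_fun_hd[OF assms(2,3)] assms(1)
  by simp

lemma E_bounded:
  assumes "Y \<in> H" "\<And>\<omega>. a \<le> Y \<omega>" "\<And>\<omega>. Y \<omega> \<le> b"
  shows "E Y = ereal (real_of_ereal (E Y))" "a \<le> real_of_ereal (E Y)" "real_of_ereal (E Y) \<le> b"
proof -
  have "ereal a \<le> E Y" "E Y \<le> ereal b"
    using E_mono[OF const_mem assms(1)] E_mono[OF assms(1) const_mem] assms E_const by metis+
  then show "E Y = ereal (real_of_ereal (E Y))" "a \<le> real_of_ereal (E Y)" "real_of_ereal (E Y) \<le> b"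
    by (cases "E Y"; auto)+
qed

lemma capacity_le: "\<xi> \<in> H \<Longrightarrow> (\<And>\<omega>. indicator A \<omega> \<le> \<xi> \<omega>) \<Longrightarrow> capacity H E A \<le> E \<xi>"
  unfolding capacity_def by (intro Inf_lower) blast

lemma capacity_real:
  "capacity H E A = ereal (real_of_ereal (capacity H E A))" "0 \<le> real_of_ereal (capacity H E A)"
proof -
  have "capacity H E A \<le> 1"
    using capacity_le[OF const_mem, of A 1] E_const[of 1] by (simp add: indicator_def one_ereal_def)
  moreover have "0 \<le> capacity H E A"
    unfolding capacity_def
  proof (rule Inf_greatest, clarify)
    fix \<xi> assume "\<xi> \<in> H" "\<forall>\<omega>. indicator A \<omega> \<le> \<xi> \<omega>"
    then have "E (\<lambda>_. 0) \<le> E \<xi>"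
      using order_trans[OF indicator_pos_le[of A]] by (intro E_mono[OF const_mem]) blast+
    then show "0 \<le> E \<xi>" using E_const[of 0] by (simp add: zero_ereal_def)
  qed
  ultimately show "capacity H E A = ereal (real_of_ereal (capacity H E A))"
    "0 \<le> real_of_ereal (capacity H E A)"
    by (cases "capacity H E A"; auto)+
qed

lemma E_le_scaled_capacity:
  assumes Y: "Y \<in> H" and c: "0 < c" and Y_nonneg: "\<And>\<omega>. 0 \<le> Y \<omega>"
    and Y_le: "\<And>\<omega>. Y \<omega> \<le> c * indicator A \<omega>"
  shows "real_of_ereal (E Y) \<le> c * real_of_ereal (capacity H E A)"
proof -
  have Y_le_c: "Y \<omega> \<le> c" for \<omega>
    using Y_le[of \<omega>] c by (cases "\<omega> \<in> A") auto
  note EY = E_bounded[OF Y Y_nonneg Y_le_c]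
  have "ereal (real_of_ereal (E Y) / c) \<le> capacity H E A"
    unfolding capacity_def
  proof (rule Inf_greatest, clarify)
    fix \<xi> assume \<xi>: "\<xi> \<in> H" "\<forall>\<omega>. indicator A \<omega> \<le> \<xi> \<omega>"
    have "E Y \<le> E (\<lambda>\<omega>. c * \<xi> \<omega>)"
    proof (rule E_mono[OF Y scale_mem[OF \<xi>(1)]])
      fix \<omega>
      have "c * indicator A \<omega> \<le> c * \<xi> \<omega>"
        using \<xi>(2) c by (intro mult_left_mono) auto
      then show "Y \<omega> \<le> c * \<xi> \<omega>" using Y_le[of \<omega>] by linarith
    qed
    also have "\<dots> = ereal c * E \<xi>" by (rule E_scale[OF \<xi>(1) c])
    finally have le: "ereal (real_of_ereal (E Y)) \<le> ereal c * E \<xi>" using EY(1) by simp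
    show "ereal (real_of_ereal (E Y) / c) \<le> E \<xi>"
      using le c by (cases "E \<xi>") (auto simp: field_simps)
  qed
  then show ?thesis
    using capacity_real[of A] c by (cases "capacity H E A") (auto simp: field_simps)
qed

subsection \<open>Truncated second moments\<close>

definition trunc_upper :: "('a \<Rightarrow> real) \<Rightarrow> real \<Rightarrow> real" where
  "trunc_upper X t = real_of_ereal (E (\<lambda>\<omega>. min ((X \<omega>)\<^sup>2) (t\<^sup>2)))"

definition trunc_lower :: "('a \<Rightarrow> real) \<Rightarrow> real \<Rightarrow> real" where
  "trunc_lower X t = real_of_ereal (lower_exp E (\<lambda>\<omega>. min ((X \<omega>)\<^sup>2) (t\<^sup>2)))"

context
  fixes X :: "'a \<Rightarrow> real"
  assumes X_mem: "X \<in> H"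
begin

lemma trunc_sq_mem:
  "(\<lambda>\<omega>. min ((X \<omega>)\<^sup>2) (t\<^sup>2)) \<in> H" "(\<lambda>\<omega>. - min ((X \<omega>)\<^sup>2) (t\<^sup>2)) \<in> H"
proof -
  show mem: "(\<lambda>\<omega>. min ((X \<omega>)\<^sup>2) (t\<^sup>2)) \<in> H"
    by (rule lipschitz_comp_mem[OF X_mem _ min_square_lipschitz]) simp
  show "(\<lambda>\<omega>. - min ((X \<omega>)\<^sup>2) (t\<^sup>2)) \<in> H"
    using scale_mem[OF mem, of "-1"] by simp
qed

lemma E_trunc_sq: "E (\<lambda>\<omega>. min ((X \<omega>)\<^sup>2) (t\<^sup>2)) = ereal (trunc_upper X t)"
  and trunc_upper_nonneg: "0 \<le> trunc_upper X t"
  using E_bounded[OF trunc_sq_mem(1)[of t], of 0 "t\<^sup>2"] by (auto simp: trunc_upper_def)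

lemma E_neg_trunc_sq: "E (\<lambda>\<omega>. - min ((X \<omega>)\<^sup>2) (t\<^sup>2)) = ereal (- trunc_lower X t)"
  using E_bounded(1)[OF trunc_sq_mem(2)[of t], of "- t\<^sup>2" 0]
  by (simp add: trunc_lower_def lower_exp_def)

lemma lower_exp_trunc_sq: "lower_exp E (\<lambda>\<omega>. min ((X \<omega>)\<^sup>2) (t\<^sup>2)) = ereal (trunc_lower X t)"
  using E_neg_trunc_sq unfolding lower_exp_def by simp

lemma trunc_lower_le_upper: "trunc_lower X t \<le> trunc_upper X t"
proof -
  have "E (\<lambda>_. 0) \<le> E (\<lambda>\<omega>. min ((X \<omega>)\<^sup>2) (t\<^sup>2)) + E (\<lambda>\<omega>. - min ((X \<omega>)\<^sup>2) (t\<^sup>2))"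
    using E_add_le[OF trunc_sq_mem[of t]] by simp
  then show ?thesis by (simp add: E_const E_trunc_sq E_neg_trunc_sq)
qed

lemma trunc_upper_mono:
  assumes "0 \<le> s" "s \<le> s'"
  shows "trunc_upper X s \<le> trunc_upper X s'"
proof -
  have "s\<^sup>2 \<le> s'\<^sup>2" using assms by (intro power_mono) auto
  then have "E (\<lambda>\<omega>. min ((X \<omega>)\<^sup>2) (s\<^sup>2)) \<le> E (\<lambda>\<omega>. min ((X \<omega>)\<^sup>2) (s'\<^sup>2))"
    by (intro E_mono[OF trunc_sq_mem(1) trunc_sq_mem(1)]) auto
  then show ?thesis by (simp add: E_trunc_sq)
qed

lemma trunc_lower_le_add_capacity:
  assumes t: "0 < t" "t \<le> z"
  shows "trunc_lower X z \<le> trunc_lower X t + z\<^sup>2 * real_of_ereal (capacity H E {\<omega>. t \<le> \<bar>X \<omega>\<bar>})"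
proof -
  define D where "D = (\<lambda>\<omega>. min ((X \<omega>)\<^sup>2) (z\<^sup>2) - min ((X \<omega>)\<^sup>2) (t\<^sup>2))"
  have D_mem: "D \<in> H" using add_mem[OF trunc_sq_mem(1)[of z] trunc_sq_mem(2)[of t]] by (simp add: D_def)
  have tz: "t\<^sup>2 \<le> z\<^sup>2" using t by (intro power_mono) auto
  have D_nonneg: "0 \<le> D \<omega>" for \<omega> using tz by (auto simp: D_def min_def)
  have D_le_z: "D \<omega> \<le> z\<^sup>2" for \<omega>
  proof -
    have "min ((X \<omega>)\<^sup>2) (z\<^sup>2) \<le> z\<^sup>2" "0 \<le> min ((X \<omega>)\<^sup>2) (t\<^sup>2)" by auto
    then show ?thesis unfolding D_def by linarith
  qed
  have D_le: "D \<omega> \<le> z\<^sup>2 * indicator {\<omega>. t \<le> \<bar>X \<omega>\<bar>} \<omega>" for \<omega>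
  proof (cases "t \<le> \<bar>X \<omega>\<bar>")
    case False
    then have "\<bar>X \<omega>\<bar> \<le> \<bar>t\<bar>" using t by simp
    then have "(X \<omega>)\<^sup>2 \<le> t\<^sup>2" by (simp add: abs_le_square_iff)
    then show ?thesis using tz by (simp add: D_def min_def)
  qed (simp add: D_le_z)
  obtain d where d: "E D = ereal d"
    using E_bounded(1)[OF D_mem D_nonneg D_le_z] by blast
  have "E (\<lambda>\<omega>. - min ((X \<omega>)\<^sup>2) (t\<^sup>2)) \<le> E (\<lambda>\<omega>. - min ((X \<omega>)\<^sup>2) (z\<^sup>2)) + E D"
    using E_add_le[OF trunc_sq_mem(2)[of z] D_mem] by (simp add: D_def)
  then have "trunc_lower X z \<le> trunc_lower X t + d"
    by (simp add: E_neg_trunc_sq d)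
  moreover have "d \<le> z\<^sup>2 * real_of_ereal (capacity H E {\<omega>. t \<le> \<bar>X \<omega>\<bar>})"
    using E_le_scaled_capacity[OF D_mem _ D_nonneg D_le] t d by simp
  ultimately show ?thesis by linarith
qed

lemma trunc_lower_at_fraction_ge:
  assumes \<epsilon>: "0 < \<epsilon>" "\<epsilon> \<le> 1" and Z: "0 < Z" and c: "0 \<le> c"
    and cap: "real_of_ereal (capacity H E {\<omega>. \<epsilon> * Z \<le> \<bar>X \<omega>\<bar>})
      \<le> c * (trunc_upper X (\<epsilon> * Z) / (\<epsilon> * Z)\<^sup>2)"
  shows "trunc_lower X Z - c / \<epsilon>\<^sup>2 * trunc_upper X Z \<le> trunc_lower X (\<epsilon> * Z)"
proof -
  have "trunc_lower X Z
      \<le> trunc_lower X (\<epsilon> * Z) + Z\<^sup>2 * real_of_ereal (capacity H E {\<omega>. \<epsilon> * Z \<le> \<bar>X \<omega>\<bar>})"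
    using \<epsilon> Z by (intro trunc_lower_le_add_capacity) (auto simp: mult_le_cancel_right1)
  also have "\<dots> \<le> trunc_lower X (\<epsilon> * Z) + Z\<^sup>2 * (c * (trunc_upper X (\<epsilon> * Z) / (\<epsilon> * Z)\<^sup>2))"
    using mult_left_mono[OF cap, of "Z\<^sup>2"] by simp
  also have "\<dots> = trunc_lower X (\<epsilon> * Z) + c / \<epsilon>\<^sup>2 * trunc_upper X (\<epsilon> * Z)"
    using \<epsilon> Z by (simp add: field_simps)
  also have "\<dots> \<le> trunc_lower X (\<epsilon> * Z) + c / \<epsilon>\<^sup>2 * trunc_upper X Z"
  proof -
    have "trunc_upper X (\<epsilon> * Z) \<le> trunc_upper X Z"
      using \<epsilon> Z by (intro trunc_upper_mono) (auto simp: mult_le_cancel_right1)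
    then have "c / \<epsilon>\<^sup>2 * trunc_upper X (\<epsilon> * Z) \<le> c / \<epsilon>\<^sup>2 * trunc_upper X Z"
      using c by (intro mult_left_mono) auto
    then show ?thesis by simp
  qed
  finally show ?thesis by linarith
qed

lemma trunc_upper_linear_growth:
  assumes "((\<lambda>c. E (\<lambda>\<omega>. max (\<bar>X \<omega>\<bar> - c) 0)) \<longlongrightarrow> 0) at_top"
  obtains C where "\<And>s. 0 < s \<Longrightarrow> trunc_upper X s \<le> s * C"
proof -
  obtain N where N: "\<And>c. N \<le> c \<Longrightarrow> E (\<lambda>\<omega>. max (\<bar>X \<omega>\<bar> - c) 0) < 1"
    using order_tendstoD(2)[OF assms, of 1] by (auto simp: eventually_at_top_linorder)
  define c0 where "c0 = max N 0"
  have c0: "0 \<le> c0" "E (\<lambda>\<omega>. max (\<bar>X \<omega>\<bar> - c0) 0) < 1" using N[of c0] by (auto simp: c0_def)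
  define M where "M = (\<lambda>\<omega>. max (\<bar>X \<omega>\<bar> - c0) 0)"
  have M_mem: "M \<in> H" unfolding M_def by (rule lipschitz_comp_mem[OF X_mem, of 1]) auto
  obtain v where v: "E M = ereal v" "v < 1"
    using E_mono[OF const_mem M_mem, of 0] c0(2) E_const[of 0] unfolding M_def
    by (cases "E (\<lambda>\<omega>. max (\<bar>X \<omega>\<bar> - c0) 0)") (auto simp: zero_ereal_def)
  show ?thesis
  proof (rule that)
    fix s :: real assume s: "0 < s"
    \<comment> \<open>via \<open>min(X^2, s^2) \<le> s \<bar>X\<bar>\<close>\<close>
    have pointwise: "min ((X \<omega>)\<^sup>2) (s\<^sup>2) \<le> s * c0 + s * M \<omega>" for \<omega>
    proof -
      have "min ((X \<omega>)\<^sup>2) (s\<^sup>2) \<le> s * \<bar>X \<omega>\<bar>"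
      proof (cases "\<bar>X \<omega>\<bar> \<le> s")
        case True
        then have "\<bar>X \<omega>\<bar> * \<bar>X \<omega>\<bar> \<le> s * \<bar>X \<omega>\<bar>" by (intro mult_right_mono) auto
        then show ?thesis by (simp add: power2_eq_square abs_mult[symmetric])
      next
        case False
        then have "s * s \<le> s * \<bar>X \<omega>\<bar>" using s by (intro mult_left_mono) auto
        then show ?thesis by (simp add: power2_eq_square)
      qed
      also have "\<dots> \<le> s * (c0 + M \<omega>)" using s unfolding M_def by (intro mult_left_mono) auto
      finally show ?thesis by (simp add: algebra_simps)
    qed
    have "E (\<lambda>\<omega>. min ((X \<omega>)\<^sup>2) (s\<^sup>2)) \<le> E (\<lambda>\<omega>. s * c0 + s * M \<omega>)"
      by (rule E_mono[OF trunc_sq_mem(1) add_mem[OF const_mem scale_mem[OF M_mem]] pointwise])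
    also have "\<dots> \<le> E (\<lambda>_. s * c0) + E (\<lambda>\<omega>. s * M \<omega>)"
      by (rule E_add_le[OF const_mem scale_mem[OF M_mem]])
    also have "\<dots> = ereal (s * c0 + s * v)" using E_const E_scale[OF M_mem s] v by simp
    finally have "trunc_upper X s \<le> s * c0 + s * v" by (simp add: E_trunc_sq)
    also have "\<dots> \<le> s * (c0 + 1)" using v s by (simp add: algebra_simps)
    finally show "trunc_upper X s \<le> s * (c0 + 1)" .
  qed
qed

lemma E_exp_neg_trunc_sq_le:
  assumes lam: "0 < lam" "lam * t\<^sup>2 \<le> 1"
  shows "real_of_ereal (E (\<lambda>\<omega>. exp (- (lam * min ((X \<omega>)\<^sup>2) (t\<^sup>2)))))
    \<le> 1 - lam * (1 - lam * t\<^sup>2 / 2) * trunc_lower X t"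
proof -
  define c1 where "c1 = lam * (1 - lam * t\<^sup>2 / 2)"
  have c1: "0 < c1" unfolding c1_def using lam by (auto intro!: mult_pos_pos)
  have pointwise: "exp (- (lam * min (a\<^sup>2) (t\<^sup>2))) \<le> 1 + c1 * (- min (a\<^sup>2) (t\<^sup>2))" for a :: real
  proof -
    define m where "m = min (a\<^sup>2) (t\<^sup>2)"
    have m: "0 \<le> m" "m \<le> t\<^sup>2" unfolding m_def by auto
    have "exp (- (lam * m)) \<le> 1 - lam * m + (lam * m)\<^sup>2 / 2"
      by (rule exp_neg_le_quadratic) (use m lam in auto)
    also have "(lam * m)\<^sup>2 = lam\<^sup>2 * (m * m)" by (simp add: power2_eq_square)
    also have "lam\<^sup>2 * (m * m) \<le> lam\<^sup>2 * (t\<^sup>2 * m)"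
      using m by (intro mult_left_mono mult_right_mono) auto
    finally show ?thesis unfolding c1_def m_def[symmetric] by (simp add: algebra_simps power2_eq_square)
  qed
  have exp_mem: "(\<lambda>\<omega>. exp (- (lam * min ((X \<omega>)\<^sup>2) (t\<^sup>2)))) \<in> H"
    using lam by (intro lipschitz_comp_mem[OF X_mem _ exp_neg_trunc_sq_lipschitz]) auto
  have scaled_mem: "(\<lambda>\<omega>. c1 * (- min ((X \<omega>)\<^sup>2) (t\<^sup>2))) \<in> H" by (rule scale_mem[OF trunc_sq_mem(2)])
  have "E (\<lambda>\<omega>. exp (- (lam * min ((X \<omega>)\<^sup>2) (t\<^sup>2)))) \<le> E (\<lambda>\<omega>. 1 + c1 * (- min ((X \<omega>)\<^sup>2) (t\<^sup>2)))"
    by (rule E_mono[OF exp_mem add_mem[OF const_mem scaled_mem] pointwise])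
  also have "\<dots> \<le> E (\<lambda>_. 1) + E (\<lambda>\<omega>. c1 * (- min ((X \<omega>)\<^sup>2) (t\<^sup>2)))"
    by (rule E_add_le[OF const_mem scaled_mem])
  also have "\<dots> = ereal (1 - c1 * trunc_lower X t)"
    using E_const[of 1] E_scale[OF trunc_sq_mem(2) c1] by (simp add: E_neg_trunc_sq one_ereal_def)
  finally show ?thesis
    using E_bounded(1)[OF exp_mem, of 0 1] lam unfolding c1_def
    by (cases "E (\<lambda>\<omega>. exp (- (lam * min ((X \<omega>)\<^sup>2) (t\<^sup>2))))") auto
qed

lemma eventually_capacity_le_trunc_ratio:
  assumes "(\<lambda>t. real_of_ereal (capacity H E {\<omega>. \<bar>X \<omega>\<bar> \<ge> t})) \<in> o[at_top](\<lambda>t. trunc_upper X t / t\<^sup>2)"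
    and "0 < c"
  shows "eventually (\<lambda>s. real_of_ereal (capacity H E {\<omega>. s \<le> \<bar>X \<omega>\<bar>}) \<le> c * (trunc_upper X s / s\<^sup>2)) at_top"
  using landau_o.smallD[OF assms]
proof (rule eventually_mono)
  fix s
  assume *: "norm (real_of_ereal (capacity H E {\<omega>. \<bar>X \<omega>\<bar> \<ge> s})) \<le> c * norm (trunc_upper X s / s\<^sup>2)"
  have "norm (trunc_upper X s / s\<^sup>2) = trunc_upper X s / s\<^sup>2"
    using trunc_upper_nonneg[of s] by simp
  then have "\<bar>real_of_ereal (capacity H E {\<omega>. s \<le> \<bar>X \<omega>\<bar>})\<bar> \<le> c * (trunc_upper X s / s\<^sup>2)"
    using * by (simp only: real_norm_def)
  then show "real_of_ereal (capacity H E {\<omega>. s \<le> \<bar>X \<omega>\<bar>}) \<le> c * (trunc_upper X s / s\<^sup>2)"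
    by (meson abs_ge_self order_trans)
qed

lemma eventually_trunc_ratio_less:
  assumes "Limsup at_top (\<lambda>t. ratio_inf (E (\<lambda>\<omega>. min ((X \<omega>)\<^sup>2) (t\<^sup>2)))
    (lower_exp E (\<lambda>\<omega>. min ((X \<omega>)\<^sup>2) (t\<^sup>2)))) < ereal \<rho>"
  shows "eventually (\<lambda>t. 0 < trunc_lower X t \<and> trunc_upper X t < \<rho> * trunc_lower X t) at_top"
  using Limsup_lessD[OF assms]
proof (rule eventually_mono)
  fix t
  assume "ratio_inf (E (\<lambda>\<omega>. min ((X \<omega>)\<^sup>2) (t\<^sup>2))) (lower_exp E (\<lambda>\<omega>. min ((X \<omega>)\<^sup>2) (t\<^sup>2)))
    < ereal \<rho>"
  then show "0 < trunc_lower X t \<and> trunc_upper X t < \<rho> * trunc_lower X t"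
    by (auto simp: E_trunc_sq lower_exp_trunc_sq ratio_inf_def divide_less_eq split: if_splits)
qed

end

end

section \<open>Independent identically distributed sequences\<close>

locale iid_sequence = sublinear_expectation +
  fixes X :: "'a \<Rightarrow> real" and Xs :: "nat \<Rightarrow> 'a \<Rightarrow> real"
  assumes X_mem: "X \<in> H" and Xs_mem: "\<And>n. Xs n \<in> H"
    and indep: "indep_seq H E Xs" and ident: "\<And>n. ident_distr E (Xs n) X"
begin

context
  fixes g :: "real \<Rightarrow> real" and K c0 :: real
  assumes K: "0 \<le> K" and g_lip: "\<And>a b. \<bar>g a - g b\<bar> \<le> K * \<bar>a - b\<bar>"
    and c0: "0 < c0" and g_bounds: "\<And>a. c0 \<le> g a \<and> g a \<le> 1"
begin

lemma lip_poly_fun_prod_list: "lip_poly_fun m (\<lambda>ys. \<Prod>y\<leftarrow>ys. g y)"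
proof (rule lip_poly_fun_if_lipschitz[of "K * m"])
  fix x y :: "real list" assume "length x = m" "length y = m"
  moreover have "0 \<le> g a \<and> g a \<le> 1" for a using g_bounds[of a] c0 by linarith
  ultimately show "\<bar>(\<Prod>y\<leftarrow>x. g y) - (\<Prod>y\<leftarrow>y. g y)\<bar> \<le> K * real m * ldist x y"
    using prod_list_map_lipschitz[of g K x y] g_lip K by simp
qed (use K in simp)

lemma prod_iid_mem: "(\<lambda>\<omega>. \<Prod>i\<leftarrow>[0..<n]. g (Xs i \<omega>)) \<in> H"
  using lip_poly_comp_mem[of "map Xs [0..<n]", OF _ lip_poly_fun_prod_list] Xs_mem
  by (auto simp: o_def)

lemma E_prod_iid:
  "E (\<lambda>\<omega>. \<Prod>i\<leftarrow>[0..<n]. g (Xs i \<omega>)) = ereal (real_of_ereal (E (\<lambda>\<omega>. g (X \<omega>))) ^ n)"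
proof (induction n)
  case 0
  show ?case using E_const[of 1] by (simp add: one_ereal_def)
next
  case (Suc n)
  define G where "G = real_of_ereal (E (\<lambda>\<omega>. g (X \<omega>)))"
  have gX_mem: "(\<lambda>\<omega>. g (X \<omega>)) \<in> H" by (rule lipschitz_comp_mem[OF X_mem K g_lip])
  have EgX: "E (\<lambda>\<omega>. g (X \<omega>)) = ereal G" and "c0 \<le> G"
    using E_bounded[OF gX_mem, of c0 1] g_bounds by (auto simp: G_def)
  then have G: "0 < G" using c0 by linarith
  have Eg: "E (\<lambda>\<omega>. g (Xs n \<omega>)) = ereal G"
    using ident_distr_lipschitz_comp[OF ident K g_lip] EgX by simp
  define \<phi> where "\<phi> = (\<lambda>ys. \<Prod>y\<leftarrow>ys. g y)"
  have lip_\<phi>: "lip_poly_fun m \<phi>" for m unfolding \<phi>_def by (rule lip_poly_fun_prod_list)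
  \<comment> \<open>the inner expectation in the definition of independence, with the first \<open>n\<close> values frozen\<close>
  have inner: "E (\<lambda>\<omega>'. \<phi> (xs @ [Xs n \<omega>'])) = ereal (\<phi> xs * G)" for xs
  proof -
    have "0 < g a" for a using g_bounds[of a] c0 by linarith
    then have "0 < \<phi> xs" unfolding \<phi>_def by (induction xs) auto
    then show ?thesis
      using E_scale[OF lipschitz_comp_mem[OF Xs_mem K g_lip]] Eg by (simp add: \<phi>_def mult.commute)
  qed
  have ind: "indep_of H E (map Xs [0..<n]) (Xs n)" using indep unfolding indep_seq_def by blast
  have "E (\<lambda>\<omega>. \<Prod>i\<leftarrow>[0..<Suc n]. g (Xs i \<omega>)) = E (\<lambda>\<omega>. \<phi> (map (\<lambda>Y. Y \<omega>) (map Xs [0..<n]) @ [Xs n \<omega>]))"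
    by (simp add: \<phi>_def o_def)
  also have "\<dots> = E (\<lambda>\<omega>. real_of_ereal (E (\<lambda>\<omega>'. \<phi> (map (\<lambda>Y. Y \<omega>) (map Xs [0..<n]) @ [Xs n \<omega>']))))"
    using ind lip_\<phi> inner unfolding indep_of_def by simp
  also have "\<dots> = E (\<lambda>\<omega>. G * (\<Prod>i\<leftarrow>[0..<n]. g (Xs i \<omega>)))"
    unfolding inner by (simp add: \<phi>_def o_def mult.commute)
  also have "\<dots> = ereal (G ^ Suc n)"
    using E_scale[OF prod_iid_mem G] Suc by (simp add: G_def)
  finally show ?case by (simp add: G_def)
qed

end

lemma capacity_sum_sq_le:
  assumes lam: "0 < lam" "lam * t\<^sup>2 \<le> 1"
  shows "capacity H E {\<omega>. (\<Sum>i<n. (Xs i \<omega>)\<^sup>2) \<le> B}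
    \<le> ereal (exp (lam * B - n * (lam * (1 - lam * t\<^sup>2 / 2) * trunc_lower X t)))"
proof -
  define g where "g a = exp (- (lam * min (a\<^sup>2) (t\<^sup>2)))" for a
  define G where "G = real_of_ereal (E (\<lambda>\<omega>. g (X \<omega>)))"
  define P where "P = (\<lambda>\<omega>. \<Prod>i\<leftarrow>[0..<n]. g (Xs i \<omega>))"
  define c1 where "c1 = lam * (1 - lam * t\<^sup>2 / 2) * trunc_lower X t"
  have g_lip: "\<bar>g a - g b\<bar> \<le> lam * (2 * \<bar>t\<bar>) * \<bar>a - b\<bar>" for a b
    unfolding g_def using exp_neg_trunc_sq_lipschitz lam by simp
  have g_bounds: "exp (- (lam * t\<^sup>2)) \<le> g a \<and> g a \<le> 1" for a
    unfolding g_def using lam by (auto simp: mult_left_mono)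
  have K: "0 \<le> lam * (2 * \<bar>t\<bar>)" using lam by simp
  note lip = K g_lip exp_gt_zero[of "- (lam * t\<^sup>2)"] g_bounds
  have P_mem: "P \<in> H" and EP: "E P = ereal (G ^ n)"
    using prod_iid_mem[OF lip] E_prod_iid[OF lip] by (simp_all add: P_def G_def)
  have "capacity H E {\<omega>. (\<Sum>i<n. (Xs i \<omega>)\<^sup>2) \<le> B} \<le> E (\<lambda>\<omega>. exp (lam * B) * P \<omega>)"
  proof (rule capacity_le[OF scale_mem[OF P_mem]])
    fix \<omega>
    have "P \<omega> = (\<Prod>i<n. g (Xs i \<omega>))"
      by (simp add: P_def atLeast0LessThan flip: prod.distinct_set_conv_list)
    then show "indicator {\<omega>. (\<Sum>i<n. (Xs i \<omega>)\<^sup>2) \<le> B} \<omega> \<le> exp (lam * B) * P \<omega>"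
      using indicator_sum_sq_le_exp_prod[of lam "\<lambda>i. Xs i \<omega>" n B t] lam
      by (simp add: g_def indicator_def)
  qed
  also have "\<dots> = ereal (exp (lam * B) * G ^ n)"
    using E_scale[OF P_mem exp_gt_zero] EP by simp
  also have "\<dots> \<le> ereal (exp (lam * B) * exp (- c1) ^ n)"
  proof -
    have "G \<le> 1 + (- c1)"
      using E_exp_neg_trunc_sq_le[OF X_mem lam] by (simp add: G_def g_def c1_def)
    also have "\<dots> \<le> exp (- c1)" by (rule exp_ge_add_one_self)
    finally have "G \<le> exp (- c1)" .
    moreover have "0 \<le> G"
      using E_bounded(2)[OF lipschitz_comp_mem[OF X_mem K g_lip], of 0 1] g_bounds
      by (simp add: G_def) (meson exp_ge_zero order_trans)
    ultimately show ?thesis by (simp add: power_mono)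
  qed
  also have "\<dots> = ereal (exp (lam * B - n * c1))"
    by (simp add: exp_diff exp_of_nat_mult[symmetric] exp_minus field_simps)
  finally show ?thesis by (simp add: c1_def)
qed

lemma capacity_small_sum_sq_le_at_level:
  assumes \<delta>: "0 < \<delta>" and a: "0 < a" and \<beta>: "0 < \<beta>" "\<beta> \<le> 1" "\<beta> * (\<delta> + a) \<le> a / 2"
    and e2: "0 < e2" "e2 \<le> 1" "4 * e2 \<le> \<beta> * a"
    and Z: "0 < Z" and L: "0 < trunc_upper X Z"
    and ratio: "(\<delta> + a) * trunc_upper X Z \<le> trunc_lower X Z"
    and cap: "real_of_ereal (capacity H E {\<omega>. sqrt e2 * Z \<le> \<bar>X \<omega>\<bar>})
      \<le> a * e2 / 4 * (trunc_upper X (sqrt e2 * Z) / (sqrt e2 * Z)\<^sup>2)"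
    and y: "0 \<le> y" "y \<le> real n * trunc_upper X Z / Z\<^sup>2"
  shows "capacity H E {\<omega>. (\<Sum>i<n. (Xs i \<omega>)\<^sup>2) \<le> \<delta> * real n * trunc_upper X Z}
    \<le> ereal (exp (- 2 * y))"
proof -
  define T where "T = sqrt e2 * Z"
  define lam where "lam = \<beta> / (e2 * Z\<^sup>2)"
  have lam: "0 < lam" "lam * T\<^sup>2 = \<beta>"
    using e2 Z \<beta> by (simp_all add: lam_def T_def power_mult_distrib)
  have "trunc_lower X Z - a * e2 / 4 / e2 * trunc_upper X Z \<le> trunc_lower X T"
    using trunc_lower_at_fraction_ge[OF X_mem _ _ Z _ cap] e2 a by (simp add: T_def)
  then have "trunc_upper X Z * (\<delta> + a) - a * trunc_upper X Z / 4 \<le> trunc_lower X T"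
    using ratio e2 by (simp add: algebra_simps)
  then have exponent: "lam * (\<delta> * real n * trunc_upper X Z)
      - real n * (lam * (1 - \<beta> / 2) * trunc_lower X T) \<le> -2 * y"
    by (intro chernoff_exponent_bound[of \<delta> "\<delta> + a" a]) (use \<delta> a \<beta> e2 Z L y lam_def in auto)
  have "capacity H E {\<omega>. (\<Sum>i<n. (Xs i \<omega>)\<^sup>2) \<le> \<delta> * real n * trunc_upper X Z}
      \<le> ereal (exp (lam * (\<delta> * real n * trunc_upper X Z)
        - real n * (lam * (1 - lam * T\<^sup>2 / 2) * trunc_lower X T)))"
    using lam \<beta> by (intro capacity_sum_sq_le) auto
  also have "\<dots> \<le> ereal (exp (- 2 * y))"
    using exponent lam by simp
  finally show ?thesis .
qed

lemma capacity_small_sum_sq_le_beyond_level: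
  assumes r: "0 < r" and \<delta>: "0 < \<delta>" "\<delta> < 1 / r\<^sup>2"
    and condI: "(\<lambda>t. real_of_ereal (capacity H E {\<omega>. \<bar>X \<omega>\<bar> \<ge> t}))
      \<in> o[at_top](\<lambda>t. trunc_upper X t / t\<^sup>2)"
    and condII: "Limsup at_top (\<lambda>t. ratio_inf (E (\<lambda>\<omega>. min ((X \<omega>)\<^sup>2) (t\<^sup>2)))
      (lower_exp E (\<lambda>\<omega>. min ((X \<omega>)\<^sup>2) (t\<^sup>2)))) < ereal (r\<^sup>2)"
  obtains N where "0 \<le> N" "\<And>Z. N \<le> Z \<Longrightarrow> 0 < trunc_upper X Z"
    "\<And>Z n y. N \<le> Z \<Longrightarrow> 0 \<le> y \<Longrightarrow> y \<le> real n * trunc_upper X Z / Z\<^sup>2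
      \<Longrightarrow> capacity H E {\<omega>. (\<Sum>i<n. (Xs i \<omega>)\<^sup>2) \<le> \<delta> * real n * trunc_upper X Z}
            \<le> ereal (exp (- 2 * y))"
proof -
  define a where "a = 1 / r\<^sup>2 - \<delta>"
  define \<beta> where "\<beta> = min 1 (a * r\<^sup>2 / 2)"
  \<comment> \<open>\<open>\<beta>\<close> becomes \<open>lam t^2\<close>: \<open>\<beta> \<le> a r^2/2\<close> keeps the second-order loss of \<open>exp\<close> small, and
    \<open>e2 \<le> \<beta> a/4\<close> makes the final exponent at least \<open>2 y\<close>\<close>
  define e2 where "e2 = min 1 (\<beta> * a / 4)"
  define c where "c = a * e2 / 4"
  have r2: "0 < r\<^sup>2" using r by simp
  have a: "0 < a" "\<delta> + a = 1 / r\<^sup>2" using \<delta> by (simp_all add: a_def)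
  have \<beta>: "0 < \<beta>" "\<beta> \<le> 1" using a r2 by (auto simp: \<beta>_def)
  have \<beta>_a: "\<beta> * (\<delta> + a) \<le> a / 2"
    using mult_right_mono[of \<beta> "a * r\<^sup>2 / 2" "1 / r\<^sup>2"] r2 a by (simp add: \<beta>_def)
  have e2: "0 < e2" "e2 \<le> 1" "4 * e2 \<le> \<beta> * a" using a \<beta> by (auto simp: e2_def)
  have c: "0 < c" using a e2 by (simp add: c_def)
  obtain N1 where N1: "\<And>s. N1 \<le> s
      \<Longrightarrow> real_of_ereal (capacity H E {\<omega>. s \<le> \<bar>X \<omega>\<bar>}) \<le> c * (trunc_upper X s / s\<^sup>2)"
    using eventually_capacity_le_trunc_ratio[OF X_mem condI c] unfolding eventually_at_top_linorder by blast
  obtain N2 where N2: "\<And>s. N2 \<le> s \<Longrightarrow> 0 < trunc_lower X s \<and> trunc_upper X s < r\<^sup>2 * trunc_lower X s"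
    using eventually_trunc_ratio_less[OF X_mem condII] unfolding eventually_at_top_linorder by blast
  show ?thesis
  proof (rule that[of "max 1 (max N2 (N1 / sqrt e2))"])
    fix Z assume Z: "max 1 (max N2 (N1 / sqrt e2)) \<le> Z"
    then show upper_pos: "0 < trunc_upper X Z"
      using N2[of Z] trunc_lower_le_upper[OF X_mem, of Z] by auto
    have ratio: "(\<delta> + a) * trunc_upper X Z \<le> trunc_lower X Z"
    proof -
      have "(\<delta> + a) * trunc_upper X Z = trunc_upper X Z / r\<^sup>2" using a(2) by simp
      also have "\<dots> < trunc_lower X Z" using N2[of Z] Z r2 by (simp add: divide_less_eq mult.commute)
      finally show ?thesis by simp
    qed
    have "N1 \<le> sqrt e2 * Z" using Z e2 by (simp add: field_simps)
    then show "capacity H E {\<omega>. (\<Sum>i<n. (Xs i \<omega>)\<^sup>2) \<le> \<delta> * real n * trunc_upper X Z}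
        \<le> ereal (exp (- 2 * y))" if "0 \<le> y" "y \<le> real n * trunc_upper X Z / Z\<^sup>2" for n y
      using capacity_small_sum_sq_le_at_level[OF \<delta>(1) a(1) \<beta> \<beta>_a e2 _ upper_pos ratio _ that]
        N1[of "sqrt e2 * Z"] Z by (simp add: c_def)
  qed simp
qed

end

theorem proposition4p3:
  fixes H :: "('a \<Rightarrow> real) set" and E :: "('a \<Rightarrow> real) \<Rightarrow> ereal"
    and X :: "'a \<Rightarrow> real" and Xs :: "nat \<Rightarrow> 'a \<Rightarrow> real"
    and r :: real and x :: "nat \<Rightarrow> real"
    and l :: "real \<Rightarrow> real" and b0 :: real and z :: "nat \<Rightarrow> real"
  assumes space: "sublinear_expectation_space H E"
    and XH: "X \<in> H" and XsH: "\<And>n. Xs n \<in> H"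
    and indep: "indep_seq H E Xs"
    and distr: "\<And>n. ident_distr E (Xs n) X"
    and mean0: "E X = 0" "lower_exp E X = 0"
    and l_def: "\<And>t. l t = real_of_ereal (E (\<lambda>\<omega>. min ((X \<omega>)\<^sup>2) (t\<^sup>2)))"
    and condI: "(\<lambda>t. real_of_ereal (capacity H E {\<omega>. \<bar>X \<omega>\<bar> \<ge> t})) \<in> o[at_top](\<lambda>t. l t / t\<^sup>2)"
    and r_pos: "0 < r"
    and condII: "Limsup at_top (\<lambda>t. ratio_inf (E (\<lambda>\<omega>. min ((X \<omega>)\<^sup>2) (t\<^sup>2)))
                                       (lower_exp E (\<lambda>\<omega>. min ((X \<omega>)\<^sup>2) (t\<^sup>2)))) < ereal (r\<^sup>2)"
    and condIII: "((\<lambda>c. E (\<lambda>\<omega>. max (\<bar>X \<omega>\<bar> - c) 0)) \<longlongrightarrow> 0) at_top"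
    and condIV: "filterlim x at_top sequentially" "x \<in> o(\<lambda>n. sqrt (real n))"
    and b0_def: "b0 = Inf {t. t \<ge> 0 \<and> l t > 0}"
    and z_def: "\<And>n. z n = Inf {s. s \<ge> b0 + 1 \<and> l s / s\<^sup>2 \<le> (x n)\<^sup>2 / real n}"
  shows "\<forall>\<delta>. 0 < \<delta> \<and> \<delta> < 1 / r\<^sup>2 \<longrightarrow>
           (\<forall>\<^sub>F n in sequentially.
              capacity H E {\<omega>. (\<Sum>i<n. (Xs i \<omega>)\<^sup>2) \<le> \<delta> * real n * l (z n)}
                \<le> ereal (exp (- 2 * (x n)\<^sup>2)))"
proof (intro allI impI)
  fix \<delta> :: real assume \<delta>: "0 < \<delta> \<and> \<delta> < 1 / r\<^sup>2"
  interpret iid_sequence H E X Xs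
    using space XH XsH indep distr by unfold_locales
  have l_eq: "l = trunc_upper X" using l_def by (simp add: fun_eq_iff trunc_upper_def)
  note l_mono = trunc_upper_mono[OF X_mem, folded l_eq]
  obtain N where N: "0 \<le> N" "\<And>Z. N \<le> Z \<Longrightarrow> 0 < l Z"
    and small_sum: "\<And>Z n y. N \<le> Z \<Longrightarrow> 0 \<le> y \<Longrightarrow> y \<le> real n * l Z / Z\<^sup>2
      \<Longrightarrow> capacity H E {\<omega>. (\<Sum>i<n. (Xs i \<omega>)\<^sup>2) \<le> \<delta> * real n * l Z} \<le> ereal (exp (- 2 * y))"
    using capacity_small_sum_sq_le_beyond_level[OF r_pos _ _ condI[unfolded l_eq] condII] \<delta>
    unfolding l_eq by blast
  have b0: "0 \<le> b0" "0 < l (b0 + 1)"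
    using Inf_positivity_threshold[OF l_mono N(1) N(2) b0_def] by simp_all
  obtain C where "\<And>s. 0 < s \<Longrightarrow> l s \<le> s * C"
    using trunc_upper_linear_growth[OF X_mem condIII] unfolding l_eq by blast
  from eventually_normalizer_bounds[OF l_mono b0(2,1) this condIV z_def, of "max (b0 + 2) N"]
  have "eventually (\<lambda>n. N \<le> z n \<and> (x n)\<^sup>2 \<le> real n * l (z n) / (z n)\<^sup>2) sequentially"
    by (simp add: eventually_conj_iff)
  then show "\<forall>\<^sub>F n in sequentially.
      capacity H E {\<omega>. (\<Sum>i<n. (Xs i \<omega>)\<^sup>2) \<le> \<delta> * real n * l (z n)} \<le> ereal (exp (- 2 * (x n)\<^sup>2))"
    by (rule eventually_mono) (use small_sum in simp)
qed

end
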